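(* Let $q\in\mathbb{C}$, $|q|<1$, $\mathbf{s}=(s_1,\dots,s_d)\in\mathbb{N}^d$ and $\mathbf{a}=(a_1,\dots,a_d)\in\mathbb{Z}_{\ge0}^d$, and put $w=s_1+\dots+s_d$. Let $$F(t)=\mathbf{R}^{a_1}\Big[\mathbf{P}^{s_1-a_1}\big[\mathbf{y}\,\mathbf{R}^{a_2}[\mathbf{P}^{s_2-a_2}[\mathbf{y}\cdots\mathbf{R}^{a_d}[\mathbf{P}^{s_d-a_d}[\mathbf{y}]]\cdots]]\big]\Big](t).$$ If $a_1+\dots+a_j>0$ for all $j=1,\dots,d$, then $\zeta_q^{\mathbf{a}}[\mathbf{s}]=(1-q)^wF(1)$ and $\mathfrak{z}_q^{\mathbf{a}}[\mathbf{s}]=F(1)$.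
   Context: $\mathfrak{z}_q^{\mathbf{t}}[\mathbf{s}]=\sum_{k_1>\dots>k_d>0}\prod_{j}\frac{q^{k_jt_j}}{(1-q^{k_j})^{s_j}}$ and $\zeta_q^{\mathbf{t}}[\mathbf{s}]=(1-q)^{|\mathbf{s}|}\mathfrak{z}_q^{\mathbf{t}}[\mathbf{s}]$. Operators on power series $f(t)$ without constant term in $t$: $\mathbf{P}[f](t)=\sum_{k\ge0}f(q^kt)$, $\mathbf{R}[f](t)=\sum_{k\ge1}f(q^kt)$, $\mathbf{D}[f](t)=f(t)-f(qt)$; $\mathbf{P}^m$ is the $m$-fold composition of $\mathbf{P}$ for $m\ge0$ and $\mathbf{P}^m:=\mathbf{D}^{-m}$ for $m<0$; $\mathbf{y}$ denotes multiplication by $\mathbf{y}(t)=\frac{t}{1-t}$ (and the innermost $\mathbf{y}$ is the function $\mathbf{y}(t)$ itself). $F(1)$ is the value at $t=1$. *)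

theory Defs
  imports "HOL-Analysis.Analysis"
begin

definition zfrak :: "complex \<Rightarrow> nat list \<Rightarrow> nat list \<Rightarrow> complex" where
  "zfrak q tt ss = infsum
     (\<lambda>ks. \<Prod>j<length ss. q ^ (ks ! j * tt ! j) / (1 - q ^ (ks ! j)) ^ (ss ! j))
     {ks. length ks = length ss \<and> sorted_wrt (>) ks \<and> (\<forall>k\<in>set ks. k > 0)}"

definition zetaq :: "complex \<Rightarrow> nat list \<Rightarrow> nat list \<Rightarrow> complex" where
  "zetaq q tt ss = (1 - q) ^ sum_list ss * zfrak q tt ss"

text \<open>Operators, acting on functions (analytic in the unit disc, vanishing at 0).\<close>
definition Pop :: "complex \<Rightarrow> (complex \<Rightarrow> complex) \<Rightarrow> complex \<Rightarrow> complex" where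
  "Pop q f t = (\<Sum>k. f (q ^ k * t))"

definition Rop :: "complex \<Rightarrow> (complex \<Rightarrow> complex) \<Rightarrow> complex \<Rightarrow> complex" where
  "Rop q f t = (\<Sum>k. f (q ^ Suc k * t))"

definition Dop :: "complex \<Rightarrow> (complex \<Rightarrow> complex) \<Rightarrow> complex \<Rightarrow> complex" where
  "Dop q f t = f t - f (q * t)"

definition Ppow :: "complex \<Rightarrow> int \<Rightarrow> (complex \<Rightarrow> complex) \<Rightarrow> complex \<Rightarrow> complex" where
  "Ppow q m f = (if m \<ge> 0 then (Pop q ^^ nat m) f else (Dop q ^^ nat (- m)) f)"

definition yfun :: "complex \<Rightarrow> complex" where
  "yfun t = t / (1 - t)"

text \<open>Fop q [(s_1,a_1),...,(s_d,a_d)] =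
  R^{a_1}[P^{s_1-a_1}[y R^{a_2}[... R^{a_d}[P^{s_d-a_d}[y]]...]]]; the innermost y is y times 1.\<close>
fun Fop :: "complex \<Rightarrow> (nat \<times> nat) list \<Rightarrow> complex \<Rightarrow> complex" where
  "Fop q [] = (\<lambda>t. 1)"
| "Fop q ((s, a) # r) =
     (Rop q ^^ a) (Ppow q (int s - int a) (\<lambda>t. yfun t * Fop q r t))"

end

theory Submission
  imports Defs
begin

(* On the open unit disc every function occurring in F is a power series without constant
   term, and each operator acts diagonally on the coefficients: expanding along the orbit
   q^k t and summing a geometric series shows that P and R multiply the n-th coefficient by
   1/(1-q^n) and q^n/(1-q^n), D multiplies it by 1-q^n, and multiplication by y = t/(1-t)
   replaces the coefficients by their strict partial sums.  Hence the n-th coefficient of F is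
   the sum of prod_j q^(k_j a_j)/(1-q^k_j)^s_j over n = k_1 > k_2 > ... > k_d > 0.  Since
   a_1 > 0, the outermost R contributes a factor q^n, so the coefficient series converges
   absolutely at t = 1, and F(1) is a rearrangement of the series defining z_q^a[s]. *)

section \<open>Power series on the unit disc\<close>

definition disc_powser :: "(nat \<Rightarrow> complex) \<Rightarrow> (complex \<Rightarrow> complex) \<Rightarrow> bool" where
  "disc_powser c f \<longleftrightarrow> 1 \<le> conv_radius c \<and> (\<forall>t. norm t < 1 \<longrightarrow> f t = (\<Sum>n. c n * t ^ n))"

lemma conv_radius_ge_1I:
  fixes c :: "nat \<Rightarrow> complex"
  assumes "\<And>r. 0 < r \<Longrightarrow> r < 1 \<Longrightarrow> summable (\<lambda>n. c n * of_real r ^ n)"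
  shows "1 \<le> conv_radius c"
  using assms by (intro conv_radius_geI_ex') (simp add: one_ereal_def)

lemma abs_summable_in_unit_disc:
  fixes c :: "nat \<Rightarrow> complex"
  assumes "1 \<le> conv_radius c" "norm t < 1"
  shows "summable (\<lambda>n. norm (c n * t ^ n))"
proof (rule abs_summable_in_conv_radius)
  have "ereal (norm t) < 1" using assms(2) by simp
  then show "ereal (norm t) < conv_radius c" using assms(1) by (rule order.strict_trans2)
qed

lemma conv_radius_ge_1_dominated:
  fixes c d :: "nat \<Rightarrow> complex"
  assumes "1 \<le> conv_radius c" "\<And>n. norm (d n) \<le> K * norm (c n)"
  shows "1 \<le> conv_radius d"
proof (rule conv_radius_ge_1I)
  fix r :: real assume "0 < r" "r < 1"
  then have dominant: "summable (\<lambda>n. K * norm (c n * of_real r ^ n))"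
    using assms(1) by (intro summable_mult abs_summable_in_unit_disc) auto
  have bound: "norm (d n * of_real r ^ n) \<le> K * norm (c n * of_real r ^ n)" for n
    using mult_right_mono[OF assms(2), of "norm (of_real r ^ n :: complex)" n]
    by (simp add: norm_mult mult.assoc)
  have "summable (\<lambda>n. norm (d n * of_real r ^ n))"
    by (rule summable_comparison_test'[OF dominant]) (simp add: bound)
  then show "summable (\<lambda>n. d n * of_real r ^ n)"
    by (rule summable_norm_cancel)
qed

lemma sums_partial_sums_times_yfun:
  fixes c :: "nat \<Rightarrow> complex"
  assumes c: "summable (\<lambda>n. norm (c n * t ^ n))" and t: "norm t < 1"
  shows "(\<lambda>n. (\<Sum>m<n. c m) * t ^ n) sums (yfun t * (\<Sum>n. c n * t ^ n))"
proof -
  define e where "e j = (if j = 0 then 0 else t ^ j)" for j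
  have "(\<lambda>j. t * t ^ j) sums (t * (1 / (1 - t)))"
    using t by (intro sums_mult geometric_sums)
  then have "(\<lambda>j. e (Suc j)) sums yfun t"
    by (simp add: e_def yfun_def)
  then have e_sums: "e sums yfun t"
    by (subst (asm) sums_Suc_iff) (simp add: e_def)
  have e_abs: "summable (\<lambda>j. norm (e j))"
    using t by (intro summable_comparison_test'[OF summable_geometric[of "norm t"]])
      (auto simp: e_def norm_power)
  have convolution: "(\<Sum>i\<le>n. c i * t ^ i * e (n - i)) = (\<Sum>m<n. c m) * t ^ n" for n
  proof -
    have "(\<Sum>i\<le>n. c i * t ^ i * e (n - i)) = (\<Sum>i<n. c i * t ^ n)"
      by (simp add: lessThan_Suc_atMost[symmetric] e_def mult.assoc power_add[symmetric])
    then show ?thesis by (simp add: sum_distrib_right)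
  qed
  have "(\<lambda>n. \<Sum>i\<le>n. c i * t ^ i * e (n - i)) sums ((\<Sum>n. c n * t ^ n) * (\<Sum>j. e j))"
    by (rule Cauchy_product_sums[OF c e_abs])
  then have "(\<lambda>n. (\<Sum>m<n. c m) * t ^ n) sums ((\<Sum>n. c n * t ^ n) * yfun t)"
    by (simp only: convolution sums_unique[OF e_sums, symmetric])
  then show ?thesis
    by (simp only: mult.commute[of "yfun t"])
qed

lemma conv_radius_partial_sums:
  fixes c :: "nat \<Rightarrow> complex"
  assumes "1 \<le> conv_radius c"
  shows "1 \<le> conv_radius (\<lambda>n. \<Sum>m<n. c m)"
proof (rule conv_radius_ge_1I)
  fix r :: real assume "0 < r" "r < 1"
  then have "norm (of_real r :: complex) < 1" by simp
  then show "summable (\<lambda>n. (\<Sum>m<n. c m) * of_real r ^ n)"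
    using sums_partial_sums_times_yfun[OF abs_summable_in_unit_disc[OF assms]]
    by (blast intro: sums_summable)
qed

lemma disc_powser_partial_sums:
  assumes "disc_powser c f"
  shows "disc_powser (\<lambda>n. \<Sum>m<n. c m) (\<lambda>t. yfun t * f t)"
  using assms conv_radius_partial_sums sums_partial_sums_times_yfun[OF abs_summable_in_unit_disc]
  unfolding disc_powser_def by (metis sums_unique)

lemma suminf_swap_norm_summable:
  fixes g :: "nat \<Rightarrow> nat \<Rightarrow> 'a::{banach, second_countable_topology}"
  assumes rows: "\<And>k. summable (\<lambda>n. norm (g k n))"
    and total: "summable (\<lambda>k. \<Sum>n. norm (g k n))"
  shows "(\<Sum>k. \<Sum>n. g k n) = (\<Sum>n. \<Sum>k. g k n)"
proof -
  have infsum_eq_suminf: "infsum f UNIV = suminf f" if "f summable_on UNIV" for f :: "nat \<Rightarrow> 'b::banach"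
    using has_sum_imp_sums[OF has_sum_infsum[OF that]] by (simp add: sums_unique)
  have "(\<lambda>x. norm ((\<lambda>(k, n). g k n) x)) summable_on UNIV \<times> UNIV"
  proof (rule Infinite_Sum.abs_summable_on_Sigma_iff[where f = "\<lambda>(k, n). g k n" and A = UNIV and B = "\<lambda>_. UNIV", THEN iffD2],
      intro conjI ballI)
    show "(\<lambda>n. norm ((\<lambda>(k, n). g k n) (k, n))) summable_on UNIV" for k
      using rows[of k] by (simp add: norm_summable_imp_summable_on)
    have "infsum (\<lambda>n. norm (g k n)) UNIV = (\<Sum>n. norm (g k n))" for k
      using rows[of k] by (simp add: infsum_eq_suminf norm_summable_imp_summable_on)
    moreover have "summable (\<lambda>k. norm (norm (\<Sum>n. norm (g k n))))"
      using total by (simp add: suminf_nonneg rows)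
    ultimately show "(\<lambda>k. norm (infsum (\<lambda>n. norm ((\<lambda>(k, n). g k n) (k, n))) UNIV)) summable_on UNIV"
      by (simp add: norm_summable_imp_summable_on)
  qed
  then have joint: "(\<lambda>(k, n). g k n) summable_on UNIV \<times> UNIV"
    by (rule abs_summable_summable)
  then have joint_swapped: "(\<lambda>(n, k). g k n) summable_on UNIV \<times> UNIV"
    by (subst summable_on_swap) (simp add: case_prod_unfold)
  have rows': "g k summable_on UNIV" for k
    using rows[of k] by (rule norm_summable_imp_summable_on)
  have "norm (g k n) \<le> (\<Sum>n. norm (g k n))" for k n
    using sum_le_suminf[OF rows, of "{n}" k] by simp
  then have "summable (\<lambda>k. norm (g k n))" for n
    by (intro summable_comparison_test'[OF total]) simp
  then have columns: "(\<lambda>k. g k n) summable_on UNIV" for n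
    by (rule norm_summable_imp_summable_on)
  have "(\<lambda>k. infsum (g k) UNIV) summable_on UNIV" "(\<lambda>n. infsum (\<lambda>k. g k n) UNIV) summable_on UNIV"
    using summable_on_Sigma_banach[of "\<lambda>k n. g k n" UNIV "\<lambda>_. UNIV"]
      summable_on_Sigma_banach[of "\<lambda>n k. g k n" UNIV "\<lambda>_. UNIV"] joint joint_swapped
    by auto
  moreover have "infsum (\<lambda>k. infsum (g k) UNIV) UNIV = infsum (\<lambda>n. infsum (\<lambda>k. g k n) UNIV) UNIV"
    using infsum_swap_banach[OF joint] by simp
  ultimately show ?thesis
    using rows' columns by (simp add: infsum_eq_suminf)
qed

lemma norm_one_minus_power_ge:
  fixes q :: complex
  assumes "norm q < 1" "0 < n"
  shows "1 - norm q \<le> norm (1 - q ^ n)"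
proof -
  have "norm q ^ n \<le> norm q ^ 1"
    using assms by (intro power_decreasing) auto
  moreover have "norm (1::complex) - norm (q ^ n) \<le> norm (1 - q ^ n)"
    by (rule norm_triangle_ineq2)
  ultimately show ?thesis by (simp add: norm_power)
qed

lemma sums_orbit_power:
  fixes q t :: complex
  assumes "norm q < 1" "0 < n"
  shows "(\<lambda>k. (q ^ (k + e) * t) ^ n) sums (q ^ (n * e) / (1 - q ^ n) * t ^ n)"
proof -
  have "norm (q ^ n) < 1"
    using assms by (simp add: norm_power power_less_one_iff)
  then have "(\<lambda>k. (q ^ (n * e) * t ^ n) * (q ^ n) ^ k) sums ((q ^ (n * e) * t ^ n) * (1 / (1 - q ^ n)))"
    by (intro sums_mult geometric_sums)
  moreover have "(\<lambda>k. (q ^ (k + e) * t) ^ n) = (\<lambda>k. (q ^ (n * e) * t ^ n) * (q ^ n) ^ k)"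
    by (simp add: power_mult_distrib power_add power_mult[symmetric] mult_ac)
  ultimately show ?thesis
    by (simp add: field_simps)
qed

lemma summable_norm_orbit_double_series:
  fixes q z :: complex
  assumes q: "norm q < 1" and c0: "c 0 = 0" and c_abs: "summable (\<lambda>n. norm (c n * z ^ n))"
  shows "summable (\<lambda>n. norm (c n * (q ^ k * z) ^ n))"
    and "summable (\<lambda>k. \<Sum>n. norm (c n * (q ^ k * z) ^ n))"
proof -
  define B where "B = (\<Sum>n. norm (c n * z ^ n))"
  have bound: "norm (c n * (q ^ k * z) ^ n) \<le> norm q ^ k * norm (c n * z ^ n)" for k n
  proof (cases "n = 0")
    case False
    have "norm (c n * (q ^ k * z) ^ n) = (norm q ^ k) ^ n * norm (c n * z ^ n)"
      by (simp add: norm_mult norm_power power_mult_distrib)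
    also have "(norm q ^ k) ^ n \<le> (norm q ^ k) ^ 1"
      using False q by (intro power_decreasing) (auto intro: power_le_one)
    finally show ?thesis
      by (simp add: mult_right_mono)
  qed (simp add: c0)
  show rows: "summable (\<lambda>n. norm (c n * (q ^ k * z) ^ n))" for k
    by (rule summable_comparison_test'[OF summable_mult[OF c_abs]]) (use bound in auto)
  have "(\<Sum>n. norm (c n * (q ^ k * z) ^ n)) \<le> norm q ^ k * B" for k
    unfolding B_def suminf_mult[OF c_abs, symmetric]
    by (intro suminf_le bound rows summable_mult c_abs)
  then show "summable (\<lambda>k. \<Sum>n. norm (c n * (q ^ k * z) ^ n))"
    using q rows by (intro summable_comparison_test'[OF summable_mult2[OF summable_geometric]])
      (auto simp: suminf_nonneg)
qed

lemma norm_orbit_coeff_le: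
  fixes q t :: complex
  assumes q: "norm q < 1" and c0: "c 0 = 0"
  shows "norm (c n * q ^ (n * e) / (1 - q ^ n) * t ^ n) \<le> norm (c n * (q ^ e * t) ^ n) / (1 - norm q)"
proof (cases "n = 0")
  case False
  have "norm (c n * q ^ (n * e) / (1 - q ^ n) * t ^ n) = norm (c n * (q ^ e * t) ^ n) / norm (1 - q ^ n)"
    by (simp add: norm_mult norm_divide norm_power power_mult_distrib power_mult[symmetric] mult.commute)
  also have "\<dots> \<le> norm (c n * (q ^ e * t) ^ n) / (1 - norm q)"
    using norm_one_minus_power_ge[OF q, of n] False q
    by (intro divide_left_mono) (auto intro!: mult_pos_pos)
  finally show ?thesis .
qed (simp add: c0)

lemma orbit_sum_powser:
  fixes q t :: complex
  assumes q: "norm q < 1" and f: "disc_powser c f" and c0: "c 0 = 0"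
    and t: "norm t \<le> 1" and shift: "norm (q ^ e * t) < 1"
  shows "(\<lambda>n. c n * q ^ (n * e) / (1 - q ^ n) * t ^ n) sums (\<Sum>k. f (q ^ (k + e) * t))"
    and "summable (\<lambda>n. norm (c n * q ^ (n * e) / (1 - q ^ n) * t ^ n))"
proof -
  have c_abs: "summable (\<lambda>n. norm (c n * (q ^ e * t) ^ n))"
    using f shift by (intro abs_summable_in_unit_disc) (simp_all add: disc_powser_def)
  have orbit: "q ^ (k + e) * t = q ^ k * (q ^ e * t)" for k
    by (simp add: power_add mult.assoc)
  have "norm (q ^ k * (q ^ e * t)) \<le> norm (q ^ e * t)" for k
    using q by (simp add: norm_mult norm_power mult_left_le_one_le power_le_one)
  then have "norm (q ^ (k + e) * t) < 1" for k
    unfolding orbit using shift by (rule le_less_trans)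
  then have f_orbit: "f (q ^ (k + e) * t) = (\<Sum>n. c n * (q ^ (k + e) * t) ^ n)" for k
    using f by (simp add: disc_powser_def)
  have columns: "(\<Sum>k. c n * (q ^ (k + e) * t) ^ n) = c n * q ^ (n * e) / (1 - q ^ n) * t ^ n" for n
  proof (cases "n = 0")
    case False
    then have "0 < n" by simp
    from sums_mult[OF sums_orbit_power[OF q this], of "c n" e t] show ?thesis
      by (simp add: sums_unique[symmetric] mult.assoc)
  qed (simp add: c0)
  show abs_summable: "summable (\<lambda>n. norm (c n * q ^ (n * e) / (1 - q ^ n) * t ^ n))"
    by (rule summable_comparison_test'[OF summable_divide[OF c_abs, of "1 - norm q"]])
      (use norm_orbit_coeff_le[where c = c, OF q c0] in simp)
  have "(\<Sum>k. f (q ^ (k + e) * t)) = (\<Sum>n. c n * q ^ (n * e) / (1 - q ^ n) * t ^ n)"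
    using suminf_swap_norm_summable[OF summable_norm_orbit_double_series[OF q c0 c_abs], unfolded orbit[symmetric]]
    by (simp add: f_orbit columns)
  with abs_summable show "(\<lambda>n. c n * q ^ (n * e) / (1 - q ^ n) * t ^ n) sums (\<Sum>k. f (q ^ (k + e) * t))"
    by (simp add: summable_norm_cancel summable_sums)
qed

lemma disc_powser_orbit_sum:
  assumes q: "norm q < 1" and f: "disc_powser c f" and c0: "c 0 = 0"
  shows "disc_powser (\<lambda>n. c n * q ^ (n * e) / (1 - q ^ n)) (\<lambda>t. \<Sum>k. f (q ^ (k + e) * t))"
proof -
  have shift: "norm (q ^ e * t) < 1" if "norm t < 1" for t
  proof -
    have "norm q ^ e * norm t \<le> norm t"
      using q by (simp add: mult_left_le_one_le power_le_one)
    then show ?thesis using that by (simp add: norm_mult norm_power)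
  qed
  have orbit: "(\<lambda>n. c n * q ^ (n * e) / (1 - q ^ n) * t ^ n) sums (\<Sum>k. f (q ^ (k + e) * t))"
    if "norm t < 1" for t
    using orbit_sum_powser(1)[OF q f c0 _ shift] that by simp
  have "1 \<le> conv_radius (\<lambda>n. c n * q ^ (n * e) / (1 - q ^ n))"
  proof (rule conv_radius_ge_1I)
    fix r :: real assume "0 < r" "r < 1"
    then have "norm (of_real r :: complex) < 1" by simp
    from orbit[OF this] show "summable (\<lambda>n. c n * q ^ (n * e) / (1 - q ^ n) * of_real r ^ n)"
      by (rule sums_summable)
  qed
  with orbit show ?thesis
    unfolding disc_powser_def by (simp add: sums_unique)
qed

lemma disc_powser_Pop:
  "norm q < 1 \<Longrightarrow> disc_powser c f \<Longrightarrow> c 0 = 0 \<Longrightarrow> disc_powser (\<lambda>n. c n * inverse (1 - q ^ n)) (Pop q f)"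
  using disc_powser_orbit_sum[of q c f 0] by (simp add: Pop_def[abs_def] divide_inverse)

lemma disc_powser_Rop:
  "norm q < 1 \<Longrightarrow> disc_powser c f \<Longrightarrow> c 0 = 0 \<Longrightarrow> disc_powser (\<lambda>n. c n * (q ^ n / (1 - q ^ n))) (Rop q f)"
  using disc_powser_orbit_sum[of q c f 1] by (simp add: Rop_def[abs_def] mult.assoc)

lemma disc_powser_Dop:
  assumes q: "norm q < 1" and f: "disc_powser c f"
  shows "disc_powser (\<lambda>n. c n * (1 - q ^ n)) (Dop q f)"
  unfolding disc_powser_def
proof (intro conjI allI impI)
  have radius: "1 \<le> conv_radius c"
    using f by (simp add: disc_powser_def)
  have "norm (c n * (1 - q ^ n)) \<le> 2 * norm (c n)" for n
  proof -
    have "norm (1 - q ^ n) \<le> 1 + norm q ^ n"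
      using norm_triangle_ineq4[of 1 "q ^ n"] by (simp add: norm_power)
    also have "\<dots> \<le> 2" using q by (simp add: power_le_one)
    finally have "norm (c n) * norm (1 - q ^ n) \<le> norm (c n) * 2"
      by (rule mult_left_mono) simp
    then show ?thesis by (simp add: norm_mult mult.commute)
  qed
  with radius show "1 \<le> conv_radius (\<lambda>n. c n * (1 - q ^ n))"
    by (rule conv_radius_ge_1_dominated)
  fix t :: complex assume t: "norm t < 1"
  have "norm (q * t) \<le> norm t"
    using q by (simp add: norm_mult mult_left_le_one_le)
  with t have qt: "norm (q * t) < 1" by simp
  have series: "(\<lambda>n. c n * u ^ n) sums f u" if "norm u < 1" for u
  proof -
    have "summable (\<lambda>n. c n * u ^ n)"
      by (rule summable_norm_cancel[OF abs_summable_in_unit_disc[OF radius that]])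
    then show ?thesis
      using f that by (simp add: disc_powser_def summable_sums)
  qed
  have "(\<lambda>n. c n * t ^ n - c n * (q * t) ^ n) sums (f t - f (q * t))"
    by (rule sums_diff[OF series[OF t] series[OF qt]])
  moreover have "c n * t ^ n - c n * (q * t) ^ n = c n * (1 - q ^ n) * t ^ n" for n
    by (simp add: power_mult_distrib algebra_simps)
  ultimately show "Dop q f t = (\<Sum>n. c n * (1 - q ^ n) * t ^ n)"
    by (simp add: Dop_def sums_unique)
qed

lemma disc_powser_funpow:
  assumes step: "\<And>c f. disc_powser c f \<Longrightarrow> c 0 = 0 \<Longrightarrow> disc_powser (\<lambda>n. c n * u n) (T f)"
    and f: "disc_powser c f" and c0: "c 0 = 0"
  shows "disc_powser (\<lambda>n. c n * u n ^ k) ((T ^^ k) f)"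
proof (induction k)
  case 0 then show ?case using f by simp
next
  case (Suc k)
  then have "disc_powser (\<lambda>n. c n * u n ^ k * u n) (T ((T ^^ k) f))"
    using c0 by (intro step) auto
  then show ?case by (simp add: ac_simps)
qed

lemma disc_powser_Ppow:
  assumes q: "norm q < 1" and f: "disc_powser c f" and c0: "c 0 = 0"
  shows "disc_powser (\<lambda>n. c n * (1 - q ^ n) powi (- m)) (Ppow q m f)"
proof (cases "0 \<le> m")
  case True
  then have "(1 - q ^ n) powi (- m) = inverse (1 - q ^ n) ^ nat m" for n
    by (simp add: power_int_minus power_int_def power_inverse)
  then show ?thesis
    using disc_powser_funpow[OF disc_powser_Pop[OF q] f c0] True
    by (simp add: Ppow_def)
next
  case False
  then have "(1 - q ^ n) powi (- m) = (1 - q ^ n) ^ nat (- m)" for n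
    by (simp add: power_int_def)
  then show ?thesis
    using disc_powser_funpow[OF disc_powser_Dop[OF q] f c0] False
    by (simp add: Ppow_def)
qed

section \<open>The coefficients of F\<close>

fun qweight :: "complex \<Rightarrow> nat \<times> nat \<Rightarrow> nat \<Rightarrow> complex" where
  "qweight q (s, a) n = q ^ (n * a) / (1 - q ^ n) ^ s"

fun nested_coeff :: "(nat \<Rightarrow> complex) list \<Rightarrow> nat \<Rightarrow> complex" where
  "nested_coeff [] n = (if n = 0 then 1 else 0)"
| "nested_coeff (w # ws) n = w n * (\<Sum>m<n. nested_coeff ws m)"

lemma nested_coeff_qweight_Cons:
  assumes q: "norm q < 1"
  shows "nested_coeff (map (qweight q) ((s, a) # r)) n
       = (\<Sum>m<n. nested_coeff (map (qweight q) r) m) * (1 - q ^ n) powi (int a - int s)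
           * (q ^ n / (1 - q ^ n)) ^ a"
proof (cases "n = 0")
  case True then show ?thesis by simp
next
  case False
  define z where "z = 1 - q ^ n"
  have "z \<noteq> 0"
    using norm_one_minus_power_ge[OF q, of n] False q by (auto simp: z_def)
  moreover have "q ^ (n * a) = (q ^ n) ^ a"
    by (rule power_mult)
  ultimately have "q ^ (n * a) / z ^ s = z powi (int a - int s) * (q ^ n / z) ^ a"
    by (simp add: power_int_diff power_divide field_simps)
  then show ?thesis by (simp add: z_def mult_ac)
qed

lemma disc_powser_Fop_layer:
  assumes q: "norm q < 1" and F: "disc_powser c F"
  shows "disc_powser (\<lambda>n. (\<Sum>m<n. c m) * (1 - q ^ n) powi (int a - int s) * (q ^ n / (1 - q ^ n)) ^ k)
           ((Rop q ^^ k) (Ppow q (int s - int a) (\<lambda>t. yfun t * F t)))"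
proof -
  have "disc_powser (\<lambda>n. (\<Sum>m<n. c m) * (1 - q ^ n) powi (- (int s - int a)))
          (Ppow q (int s - int a) (\<lambda>t. yfun t * F t))"
    by (rule disc_powser_Ppow[OF q disc_powser_partial_sums[OF F]]) simp
  then show ?thesis
    using disc_powser_funpow[OF disc_powser_Rop[OF q]] by simp
qed

lemma disc_powser_nested_coeff_Nil: "disc_powser (nested_coeff []) (\<lambda>t. 1)"
proof -
  have "(\<lambda>n. nested_coeff [] n * t ^ n) = (\<lambda>n. if n = 0 then 1 else 0)" for t :: complex
    by auto
  then have series: "(\<lambda>n. nested_coeff [] n * t ^ n) sums 1" for t :: complex
    using sums_single[of 0 "\<lambda>_. 1 :: complex"] by simp
  have "1 \<le> conv_radius (nested_coeff [])"
    by (rule conv_radius_ge_1I) (rule sums_summable[OF series])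
  with series show ?thesis
    by (simp add: disc_powser_def sums_unique)
qed

lemma disc_powser_Fop:
  assumes q: "norm q < 1"
  shows "disc_powser (nested_coeff (map (qweight q) r)) (Fop q r)"
proof (induction r)
  case Nil
  show ?case
    using disc_powser_nested_coeff_Nil by (simp only: list.map(1) Fop.simps(1))
next
  case (Cons p r)
  obtain s a where p: "p = (s, a)" by force
  have "nested_coeff (map (qweight q) ((s, a) # r))
      = (\<lambda>n. (\<Sum>m<n. nested_coeff (map (qweight q) r) m) * (1 - q ^ n) powi (int a - int s)
           * (q ^ n / (1 - q ^ n)) ^ a)"
    by (rule ext) (rule nested_coeff_qweight_Cons[OF q])
  then show ?case
    using disc_powser_Fop_layer[OF q Cons.IH, of a s a] by (simp add: p)
qed

text \<open>The outermost \<open>R\<close> keeps the orbit \<open>q t, q\<^sup>2 t, \<dots>\<close> inside the disc even for \<open>t = 1\<close>.\<close>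

lemma Fop_Cons_sums_at_1:
  assumes q: "norm q < 1" and a: "0 < a"
  shows "nested_coeff (map (qweight q) ((s, a) # r)) sums Fop q ((s, a) # r) 1"
    and "summable (\<lambda>n. norm (nested_coeff (map (qweight q) ((s, a) # r)) n))"
proof -
  define G where "G = Ppow q (int s - int a) (\<lambda>t. yfun t * Fop q r t)"
  define C where "C n = (\<Sum>m<n. nested_coeff (map (qweight q) r) m) * (1 - q ^ n) powi (int a - int s)
    * (q ^ n / (1 - q ^ n)) ^ (a - 1)" for n
  have C: "disc_powser C ((Rop q ^^ (a - 1)) G)"
    unfolding C_def G_def by (rule disc_powser_Fop_layer[OF q disc_powser_Fop[OF q]])
  have C0: "C 0 = 0" by (simp add: C_def)
  have Fop: "Fop q ((s, a) # r) = Rop q ((Rop q ^^ (a - 1)) G)"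
    using a by (cases a) (simp_all add: G_def)
  have coeff: "C n * q ^ (n * 1) / (1 - q ^ n) * 1 ^ n = nested_coeff (map (qweight q) ((s, a) # r)) n" for n
  proof -
    have "(q ^ n / (1 - q ^ n)) ^ a = (q ^ n / (1 - q ^ n)) ^ (a - 1) * (q ^ n / (1 - q ^ n))"
      using a power_Suc2[of "q ^ n / (1 - q ^ n)" "a - 1"] by simp
    then show ?thesis
      unfolding nested_coeff_qweight_Cons[OF q] by (simp add: C_def)
  qed
  have unit: "norm (1::complex) \<le> 1" "norm (q ^ 1 * 1) < 1" using q by simp_all
  show "nested_coeff (map (qweight q) ((s, a) # r)) sums Fop q ((s, a) # r) 1"
  proof -
    have "(\<Sum>k. ((Rop q ^^ (a - 1)) G) (q ^ (k + 1) * 1)) = Fop q ((s, a) # r) 1"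
      unfolding Fop by (simp add: Rop_def)
    with orbit_sum_powser(1)[OF q C C0 unit] show ?thesis
      by (simp only: coeff)
  qed
  show "summable (\<lambda>n. norm (nested_coeff (map (qweight q) ((s, a) # r)) n))"
    using orbit_sum_powser(2)[OF q C C0 unit] by (simp only: coeff)
qed

section \<open>Sums over decreasing index lists\<close>

definition dec_lists :: "nat \<Rightarrow> nat list set" where
  "dec_lists d = {ks. length ks = d \<and> sorted_wrt (>) ks \<and> (\<forall>k\<in>set ks. 0 < k)}"

definition dec_lists_below :: "nat \<Rightarrow> nat \<Rightarrow> nat list set" where
  "dec_lists_below d N = {ks \<in> dec_lists d. \<forall>k\<in>set ks. k < N}"

definition weight_prod :: "(nat \<Rightarrow> complex) list \<Rightarrow> nat list \<Rightarrow> complex" where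
  "weight_prod ws ks = (\<Prod>j<length ws. (ws ! j) (ks ! j))"

lemma finite_dec_lists_below: "finite (dec_lists_below d N)"
proof (rule finite_subset)
  show "dec_lists_below d N \<subseteq> {ks. set ks \<subseteq> {..<N} \<and> length ks = d}"
    by (auto simp: dec_lists_below_def dec_lists_def)
  show "finite {ks. set ks \<subseteq> {..<N} \<and> length ks = d}"
    by (rule finite_lists_length_eq) simp
qed

lemma weight_prod_Cons: "weight_prod (w # ws) (m # ks) = w m * weight_prod ws ks"
  unfolding weight_prod_def by (simp only: length_Cons prod.lessThan_Suc_shift) simp

lemma bij_betw_Cons_dec_lists_below:
  "bij_betw (\<lambda>(m, ks). m # ks) (SIGMA m:{1..<N}. dec_lists_below d m) (dec_lists_below (Suc d) N)"
proof (rule bij_betw_imageI)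
  show "inj_on (\<lambda>(m, ks). m # ks) (SIGMA m:{1..<N}. dec_lists_below d m)"
    by (auto simp: inj_on_def)
  show "(\<lambda>(m, ks). m # ks) ` (SIGMA m:{1..<N}. dec_lists_below d m) = dec_lists_below (Suc d) N"
  proof
    show "(\<lambda>(m, ks). m # ks) ` (SIGMA m:{1..<N}. dec_lists_below d m) \<subseteq> dec_lists_below (Suc d) N"
      by (force simp: dec_lists_below_def dec_lists_def)
    show "dec_lists_below (Suc d) N \<subseteq> (\<lambda>(m, ks). m # ks) ` (SIGMA m:{1..<N}. dec_lists_below d m)"
    proof
      fix ks' assume "ks' \<in> dec_lists_below (Suc d) N"
      then obtain m ks where "ks' = m # ks" "(m, ks) \<in> (SIGMA m:{1..<N}. dec_lists_below d m)"
        by (cases ks') (auto simp: dec_lists_below_def dec_lists_def)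
      then show "ks' \<in> (\<lambda>(m, ks). m # ks) ` (SIGMA m:{1..<N}. dec_lists_below d m)"
        by force
    qed
  qed
qed

lemma sum_nested_coeff_eq_sum_dec_lists_below:
  assumes "ws \<noteq> [] \<or> 0 < N"
  shows "(\<Sum>m<N. nested_coeff ws m) = (\<Sum>ks\<in>dec_lists_below (length ws) N. weight_prod ws ks)"
  using assms
proof (induction ws arbitrary: N)
  case Nil
  then have "dec_lists_below 0 N = {[]}"
    by (auto simp: dec_lists_below_def dec_lists_def)
  moreover have "(\<Sum>m<N. nested_coeff [] m) = 1"
    using Nil by (simp add: sum.If_cases lessThan_def)
  ultimately show ?case by (simp add: weight_prod_def)
next
  case (Cons w ws)
  define d where "d = length ws"
  have "(\<Sum>m<N. nested_coeff (w # ws) m) = (\<Sum>m\<in>{1..<N}. nested_coeff (w # ws) m)"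
    by (rule sum.mono_neutral_right) (auto simp: not_le)
  also have "\<dots> = (\<Sum>m\<in>{1..<N}. \<Sum>ks\<in>dec_lists_below d m. weight_prod (w # ws) (m # ks))"
  proof (rule sum.cong)
    fix m assume "m \<in> {1..<N}"
    then have "(\<Sum>m'<m. nested_coeff ws m') = (\<Sum>ks\<in>dec_lists_below d m. weight_prod ws ks)"
      using Cons.IH[of m] by (simp add: d_def)
    then show "nested_coeff (w # ws) m = (\<Sum>ks\<in>dec_lists_below d m. weight_prod (w # ws) (m # ks))"
      by (simp add: weight_prod_Cons sum_distrib_left)
  qed simp
  also have "\<dots> = (\<Sum>(m, ks)\<in>(SIGMA m:{1..<N}. dec_lists_below d m). weight_prod (w # ws) (m # ks))"
    by (rule sum.Sigma) (auto simp: finite_dec_lists_below)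
  also have "\<dots> = (\<Sum>ks'\<in>dec_lists_below (Suc d) N. weight_prod (w # ws) ks')"
    using sum.reindex_bij_betw[OF bij_betw_Cons_dec_lists_below[of N d], of "weight_prod (w # ws)"]
    by (simp add: case_prod_unfold)
  finally show ?case by (simp add: d_def)
qed

lemma eventually_subset_dec_lists_below:
  assumes "finite F" "F \<subseteq> dec_lists d"
  shows "eventually (\<lambda>N. F \<subseteq> dec_lists_below d N) sequentially"
proof -
  define M where "M = Max (insert 0 (\<Union>(set ` F)))"
  have "k \<le> M" if "ks \<in> F" "k \<in> set ks" for ks k
    unfolding M_def using assms(1) that by (intro Max_ge) auto
  then have "F \<subseteq> dec_lists_below d N" if "Suc M \<le> N" for N
    using assms(2) that by (fastforce simp: dec_lists_below_def)
  then show ?thesis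
    unfolding eventually_sequentially by blast
qed

lemma filterlim_dec_lists_below:
  "filterlim (dec_lists_below d) (finite_subsets_at_top (dec_lists d)) sequentially"
  unfolding filterlim_def le_filter_def eventually_filtermap
proof (intro allI impI)
  fix P assume "eventually P (finite_subsets_at_top (dec_lists d))"
  then obtain X where X: "finite X" "X \<subseteq> dec_lists d"
    and P: "\<And>Y. finite Y \<Longrightarrow> X \<subseteq> Y \<Longrightarrow> Y \<subseteq> dec_lists d \<Longrightarrow> P Y"
    by (auto simp: eventually_finite_subsets_at_top)
  have below: "dec_lists_below d N \<subseteq> dec_lists d" for N
    by (auto simp: dec_lists_below_def)
  from eventually_subset_dec_lists_below[OF X]
  show "eventually (\<lambda>N. P (dec_lists_below d N)) sequentially"
    by (rule eventually_mono) (intro P finite_dec_lists_below below)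
qed

lemma nonneg_summable_on_dec_lists:
  fixes f :: "nat list \<Rightarrow> real"
  assumes nonneg: "\<And>ks. 0 \<le> f ks" and bound: "\<And>N. sum f (dec_lists_below d N) \<le> M"
  shows "f summable_on dec_lists d"
proof (rule nonneg_bdd_above_summable_on)
  show "bdd_above (sum f ` {F. F \<subseteq> dec_lists d \<and> finite F})"
  proof (rule bdd_aboveI)
    fix x assume "x \<in> sum f ` {F. F \<subseteq> dec_lists d \<and> finite F}"
    then obtain F where F: "F \<subseteq> dec_lists d" "finite F" and x: "x = sum f F"
      by auto
    obtain N where "F \<subseteq> dec_lists_below d N"
      using eventually_subset_dec_lists_below[OF F(2,1)] by (auto simp: eventually_sequentially)
    then have "x \<le> sum f (dec_lists_below d N)"
      unfolding x using nonneg by (intro sum_mono2 finite_dec_lists_below) auto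
    then show "x \<le> M" using bound[of N] by simp
  qed
qed (rule nonneg)

lemma tendsto_sum_dec_lists_below:
  assumes "f summable_on dec_lists d"
  shows "(\<lambda>N. sum f (dec_lists_below d N)) \<longlonglongrightarrow> infsum f (dec_lists d)"
proof -
  have "(sum f \<longlongrightarrow> infsum f (dec_lists d)) (finite_subsets_at_top (dec_lists d))"
    using has_sum_infsum[OF assms] by (simp add: has_sum_def)
  then show ?thesis
    by (rule filterlim_compose[OF _ filterlim_dec_lists_below])
qed

lemma weight_prod_norms:
  "weight_prod (map (\<lambda>w n. complex_of_real (norm (w n))) ws) ks = complex_of_real (norm (weight_prod ws ks))"
  by (simp add: weight_prod_def prod_norm[symmetric] of_real_prod)

lemma infsum_weight_prod_dec_lists:
  assumes ne: "ws \<noteq> []" and coeff_abs: "summable (\<lambda>n. norm (nested_coeff ws n))"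
    and norms_abs: "summable (\<lambda>n. norm (nested_coeff (map (\<lambda>w n. complex_of_real (norm (w n))) ws) n))"
  shows "infsum (weight_prod ws) (dec_lists (length ws)) = (\<Sum>n. nested_coeff ws n)"
proof -
  define d where "d = length ws"
  define ws' where "ws' = map (\<lambda>w n. complex_of_real (norm (w n))) ws"
  have "(\<Sum>ks\<in>dec_lists_below d N. norm (weight_prod ws ks)) \<le> (\<Sum>n. norm (nested_coeff ws' n))" for N
  proof -
    have "(\<Sum>ks\<in>dec_lists_below d N. norm (weight_prod ws ks)) = Re (\<Sum>ks\<in>dec_lists_below d N. weight_prod ws' ks)"
      by (simp add: ws'_def weight_prod_norms)
    also have "\<dots> = Re (\<Sum>m<N. nested_coeff ws' m)"
      using sum_nested_coeff_eq_sum_dec_lists_below[of ws' N] ne by (simp add: ws'_def d_def)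
    also have "\<dots> \<le> (\<Sum>m<N. norm (nested_coeff ws' m))"
      by (rule order.trans[OF complex_Re_le_cmod norm_sum])
    also have "\<dots> \<le> (\<Sum>n. norm (nested_coeff ws' n))"
      by (rule sum_le_suminf) (use norms_abs in \<open>auto simp: ws'_def\<close>)
    finally show ?thesis .
  qed
  then have "(\<lambda>ks. norm (weight_prod ws ks)) summable_on dec_lists d"
    by (intro nonneg_summable_on_dec_lists) auto
  then have "(\<lambda>N. sum (weight_prod ws) (dec_lists_below d N)) \<longlonglongrightarrow> infsum (weight_prod ws) (dec_lists d)"
    by (rule tendsto_sum_dec_lists_below[OF abs_summable_summable])
  moreover have "(\<lambda>N. sum (weight_prod ws) (dec_lists_below d N)) = (\<lambda>N. \<Sum>m<N. nested_coeff ws m)"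
    using sum_nested_coeff_eq_sum_dec_lists_below ne by (simp add: d_def fun_eq_iff)
  ultimately show ?thesis
    using summable_LIMSEQ[OF summable_norm_cancel[OF coeff_abs]] LIMSEQ_unique by (simp add: d_def)
qed

lemma conv_radius_nested_coeff:
  assumes "\<forall>w\<in>set ws. \<exists>K. \<forall>n>0. norm (w n) \<le> K"
  shows "1 \<le> conv_radius (nested_coeff ws)"
  using assms
proof (induction ws)
  case Nil
  show ?case
    using disc_powser_nested_coeff_Nil by (simp add: disc_powser_def)
next
  case (Cons w ws)
  then obtain K where K: "\<And>n. 0 < n \<Longrightarrow> norm (w n) \<le> K" by auto
  have "norm (nested_coeff (w # ws) n) \<le> max K 0 * norm (\<Sum>m<n. nested_coeff ws m)" for n
  proof (cases "n = 0")
    case False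
    then have "norm (w n) \<le> max K 0"
      using K[of n] by linarith
    then show ?thesis
      unfolding nested_coeff.simps norm_mult by (rule mult_right_mono) simp
  qed simp
  moreover have "1 \<le> conv_radius (\<lambda>n. \<Sum>m<n. nested_coeff ws m)"
    using Cons by (intro conv_radius_partial_sums) simp
  ultimately show ?case
    using conv_radius_ge_1_dominated by blast
qed

lemma summable_norm_nested_coeff_Cons:
  assumes ws: "1 \<le> conv_radius (nested_coeff ws)" and r: "0 \<le> r" "r < 1"
    and w: "\<And>n. 0 < n \<Longrightarrow> norm (w n) \<le> K * r ^ n"
  shows "summable (\<lambda>n. norm (nested_coeff (w # ws) n))"
proof -
  have "norm (of_real r :: complex) < 1" using r by simp
  then have "summable (\<lambda>n. norm ((\<Sum>m<n. nested_coeff ws m) * of_real r ^ n))"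
    by (rule abs_summable_in_unit_disc[OF conv_radius_partial_sums[OF ws]])
  then have partial_abs: "summable (\<lambda>n. max K 0 * (norm (\<Sum>m<n. nested_coeff ws m) * r ^ n))"
    using r by (intro summable_mult) (simp add: norm_mult norm_power)
  show ?thesis
  proof (rule summable_comparison_test'[OF partial_abs])
    fix n
    show "norm (norm (nested_coeff (w # ws) n)) \<le> max K 0 * (norm (\<Sum>m<n. nested_coeff ws m) * r ^ n)"
    proof (cases "n = 0")
      case False
      have "norm (w n) \<le> K * r ^ n" using w False by simp
      also have "\<dots> \<le> max K 0 * r ^ n" using r by (intro mult_right_mono) simp_all
      finally have "norm (w n) * norm (\<Sum>m<n. nested_coeff ws m) \<le> max K 0 * r ^ n * norm (\<Sum>m<n. nested_coeff ws m)"
        by (rule mult_right_mono) simp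
      then show ?thesis by (simp add: norm_mult mult_ac)
    qed simp
  qed
qed

lemma norm_qweight_le:
  assumes q: "norm q < 1" and n: "0 < n"
  shows "norm (qweight q (s, a) n) \<le> norm q ^ (n * a) / (1 - norm q) ^ s"
proof -
  have gap: "0 < (1 - norm q) ^ s" using q by simp
  have le: "(1 - norm q) ^ s \<le> norm (1 - q ^ n) ^ s"
    using norm_one_minus_power_ge[OF q n] q by (intro power_mono) simp_all
  moreover have "0 < norm (1 - q ^ n) ^ s * (1 - norm q) ^ s"
    using gap le by (simp add: zero_less_mult_iff)
  ultimately have "norm q ^ (n * a) / norm (1 - q ^ n) ^ s \<le> norm q ^ (n * a) / (1 - norm q) ^ s"
    by (intro divide_left_mono) simp_all
  then show ?thesis
    by (simp add: norm_divide norm_power)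
qed

lemma summable_norm_nested_coeff_norms_qweight:
  assumes q: "norm q < 1" and a: "0 < a"
  shows "summable (\<lambda>n. norm (nested_coeff (map (\<lambda>w n. complex_of_real (norm (w n))) (map (qweight q) ((s, a) # r))) n))"
proof -
  define norms :: "(nat \<Rightarrow> complex) \<Rightarrow> nat \<Rightarrow> complex"
    where "norms w n = complex_of_real (norm (w n))" for w n
  have tail: "1 \<le> conv_radius (nested_coeff (map norms (map (qweight q) r)))"
  proof (rule conv_radius_nested_coeff, intro ballI)
    fix w assume "w \<in> set (map norms (map (qweight q) r))"
    then obtain sj aj where w: "w = norms (qweight q (sj, aj))" by auto
    have "norm (w n) \<le> 1 / (1 - norm q) ^ sj" if "0 < n" for n
    proof -
      have "norm (w n) \<le> norm q ^ (n * aj) / (1 - norm q) ^ sj"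
        using norm_qweight_le[OF q that] by (simp add: w norms_def)
      also have "\<dots> \<le> 1 / (1 - norm q) ^ sj"
        using q by (intro divide_right_mono power_le_one) auto
      finally show ?thesis .
    qed
    then show "\<exists>K. \<forall>n>0. norm (w n) \<le> K" by blast
  qed
  have head: "norm (norms (qweight q (s, a)) n) \<le> 1 / (1 - norm q) ^ s * norm q ^ n" if "0 < n" for n
  proof -
    have "norm (norms (qweight q (s, a)) n) \<le> norm q ^ (n * a) / (1 - norm q) ^ s"
      using norm_qweight_le[OF q that] by (simp add: norms_def)
    also have "norm q ^ (n * a) \<le> norm q ^ n"
      using q a by (intro power_decreasing) auto
    then have "norm q ^ (n * a) / (1 - norm q) ^ s \<le> norm q ^ n / (1 - norm q) ^ s"
      using q by (intro divide_right_mono) auto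
    finally show ?thesis by simp
  qed
  show ?thesis
    using summable_norm_nested_coeff_Cons[OF tail _ _ head] q by (simp add: norms_def[abs_def])
qed

lemma zfrak_Cons_eq_Fop_at_1:
  assumes q: "norm q < 1" and len: "length a = length s" and a0: "0 < a0"
  shows "zfrak q (a0 # a) (s0 # s) = Fop q (zip (s0 # s) (a0 # a)) 1"
proof -
  define ws where "ws = map (qweight q) (zip (s0 # s) (a0 # a))"
  have coeff: "nested_coeff ws sums Fop q (zip (s0 # s) (a0 # a)) 1"
    "summable (\<lambda>n. norm (nested_coeff ws n))"
    using Fop_Cons_sums_at_1[OF q a0, of s0 "zip s a"] by (simp_all add: ws_def)
  have "infsum (weight_prod ws) (dec_lists (length ws)) = (\<Sum>n. nested_coeff ws n)"
    using infsum_weight_prod_dec_lists[OF _ coeff(2)]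
      summable_norm_nested_coeff_norms_qweight[OF q a0, of s0 "zip s a"]
    by (simp add: ws_def)
  moreover have "zfrak q (a0 # a) (s0 # s) = infsum (weight_prod ws) (dec_lists (length ws))"
  proof -
    have length_ws: "length ws = length (s0 # s)"
      using len by (simp add: ws_def)
    have "(ws ! j) k = q ^ (k * (a0 # a) ! j) / (1 - q ^ k) ^ (s0 # s) ! j" if "j < length (s0 # s)" for j k
      using that len unfolding ws_def by (simp del: zip_Cons_Cons list.map)
    then show ?thesis
      unfolding zfrak_def weight_prod_def dec_lists_def length_ws
      by (intro infsum_cong prod.cong) simp_all
  qed
  ultimately show ?thesis
    using sums_unique[OF coeff(1)] by simp
qed

theorem theorem6p2:
  fixes q :: complex and s a :: "nat list"
  assumes "norm q < 1"
    and "length a = length s"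
    and "\<forall>x\<in>set s. x > 0"
    and "\<forall>j\<in>{1..length s}. sum_list (take j a) > 0"
  shows "zetaq q a s = (1 - q) ^ sum_list s * Fop q (zip s a) 1
         \<and> zfrak q a s = Fop q (zip s a) 1"
proof -
  have "zfrak q a s = Fop q (zip s a) 1"
  proof (cases s)
    case Nil
    moreover have "{ks :: nat list. length ks = 0 \<and> sorted_wrt (>) ks \<and> (\<forall>k\<in>set ks. k > 0)} = {[]}"
      by auto
    ultimately show ?thesis
      using assms(2) by (simp add: zfrak_def)
  next
    case (Cons s0 s')
    with assms(2) obtain a0 a' where a: "a = a0 # a'"
      by (cases a) auto
    \<comment> \<open>only the case \<open>j = 1\<close> of the last hypothesis is needed\<close>
    with Cons assms(4) have "0 < a0"
      by (auto dest: bspec[of _ _ 1])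
    with assms(1,2) show ?thesis
      by (simp add: Cons a zfrak_Cons_eq_Fop_at_1)
  qed
  then show ?thesis
    by (simp add: zetaq_def)
qed

end
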